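(* Let $X$ be a set and $F,F'$ forests of planar binary trees with leaves decorated by $X$, with $F'=T_1\cdots T_k$, $k\ge1$. Then in $T(\mathrm{Mag}(X))$: $F*F'=\sum_{\sigma\in S_k}(-1)^{O(\sigma)+k}\,F\curvearrowleft\Psi_{F'}(\sigma)$, where $O(\sigma)$ is the number of orbits of $\sigma$ on $\{1,\dots,k\}$.
   Context: Trees/forests: $\mathrm{Mag}(X)$ is identified with the span of planar rooted binary trees with leaves decorated by $X$, magmatic product $T_1*T_2=T_1\vee T_2$ (graft $T_1,T_2$ as left and right subtrees of a new root); $T(\mathrm{Mag}(X))$ has basis the forests, product concatenation, trees primitive, and $*$ extended as the unique bilinear map with, for all $f,g,h$ and trees $y$: $\varepsilon(f*g)=\varepsilon(f)\varepsilon(g)$; $\Delta(f*g)=\Delta(f)*\Delta(g)$; $f*1=f$; $1*f=\varepsilon(f)1$; $f*(gy)=(f*g)*y-f*(g*y)$; $(fg)*h=(f*h^{(1)})(g*h^{(2)})$; $(f*g)*h=f*\big((g*h^{(1)})h^{(2)}\big)$. For forests $F=F_1\cdots F_p$, $S=S_1\cdots S_n$: $F\curvearrowleft S_1=\sum_iF_1\cdots(F_i\vee S_1)\cdots F_p$ and $F\curvearrowleft S=(F\curvearrowleft S_1\cdots S_{n-1})*S_n$. Labelled skeleton: for a word $w$ of distinct positive integers define a planar binary tree with internal nodes labelled by the letters of $w$ recursively: the empty word gives the single leaf $|$, and if $w=w'\,m\,w''$ with $m=\min(w)$, the tree is the one with root labelled $m$, left subtree that of $w'$ and right subtree that of $w''$.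 $\Psi_{F'}(\sigma)$: let $O_1,\dots,O_r$ be the orbits of $\sigma$ ordered by increasing minimum. For an orbit $O=\{o\}$ of size one, the associated tree is $T_o$. For an orbit $O$ of size $m\ge2$ with minimum $o$, let $c_1=o$, $c_{j+1}=\sigma(c_j)$, $\tau=c_2c_3\cdots c_m$, and take the labelled skeleton of $\tau$ (which has $m$ leaves); graft $T_o$ on its leftmost leaf and, for each internal node labelled $c$, graft $T_c$ on the leftmost leaf of the right subtree of that node. $\Psi_{F'}(\sigma)$ is the forest of the $r$ trees so obtained, in the order of $O_1,\dots,O_r$. *)

theory Defs
  imports "HOL-Library.Poly_Mapping" "HOL-Combinatorics.Orbits" "HOL-Combinatorics.Permutations"
begin

datatype 'x tree = Leaf 'x | Node "'x tree" "'x tree"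

text \<open>Magmatic product (grafting): T1 \<or> T2 = Node T1 T2.\<close>

type_synonym 'x forest = "'x tree list"

text \<open>T(Mag(X)): integer linear combinations of forests; product = concatenation,
  unit = the empty forest.\<close>
type_synonym 'x tmag = "'x forest \<Rightarrow>\<^sub>0 int"
type_synonym 'x tmag2 = "('x forest \<times> 'x forest) \<Rightarrow>\<^sub>0 int"

definition cmul :: "'x tmag \<Rightarrow> 'x tmag \<Rightarrow> 'x tmag" where
  "cmul a b = frag_extend (\<lambda>u. frag_extend (\<lambda>v. frag_of (u @ v)) b) a"

definition tens :: "'x tmag \<Rightarrow> 'x tmag \<Rightarrow> 'x tmag2" where
  "tens a b = frag_extend (\<lambda>u. frag_extend (\<lambda>v. frag_of (u, v)) b) a"

definition counit :: "'x forest \<Rightarrow> int" where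
  "counit w = (if w = [] then 1 else 0)"

text \<open>Deshuffle coproduct (trees primitive), on basis forests.\<close>
definition coprod :: "'x forest \<Rightarrow> 'x tmag2" where
  "coprod w = (\<Sum>S\<in>Pow {0..<length w}. frag_of (nths w S, nths w (- S)))"

definition bilin :: "('x forest \<Rightarrow> 'x forest \<Rightarrow> 'x tmag) \<Rightarrow> 'x tmag \<Rightarrow> 'x tmag \<Rightarrow> 'x tmag" where
  "bilin P a b = frag_extend (\<lambda>u. frag_extend (\<lambda>v. P u v) b) a"

definition bilin2 :: "('x forest \<Rightarrow> 'x forest \<Rightarrow> 'x tmag) \<Rightarrow> 'x tmag2 \<Rightarrow> 'x tmag2 \<Rightarrow> 'x tmag2" where
  "bilin2 P a b = frag_extend (\<lambda>(u1,u2). frag_extend (\<lambda>(v1,v2). tens (P u1 v1) (P u2 v2)) b) a"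

definition counit_lin :: "'x tmag \<Rightarrow> int" where
  "counit_lin a = Poly_Mapping.lookup a []"

text \<open>The defining properties of the product * on T(Mag(X)), stated on basis forests
  (all properties are multilinear, so this is equivalent to stating them for all
  elements).  Sweedler sums are written out
  via the coproduct.\<close>
definition is_mag_star :: "('x forest \<Rightarrow> 'x forest \<Rightarrow> 'x tmag) \<Rightarrow> bool" where
  "is_mag_star P \<longleftrightarrow>
     (\<forall>t1 t2. P [t1] [t2] = frag_of [Node t1 t2]) \<and>
     (\<forall>f g. counit_lin (P f g) = counit f * counit g) \<and>
     (\<forall>f g. frag_extend coprod (P f g) = bilin2 P (coprod f) (coprod g)) \<and>
     (\<forall>f. P f [] = frag_of f) \<and>
     (\<forall>f. P [] f = frag_cmul (counit f) (frag_of [])) \<and>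
     (\<forall>f g y. P f (g @ [y]) =
         bilin P (P f g) (frag_of [y]) - bilin P (frag_of f) (P g [y])) \<and>
     (\<forall>f g h. P (f @ g) h =
         frag_extend (\<lambda>(h1, h2). cmul (P f h1) (P g h2)) (coprod h)) \<and>
     (\<forall>f g h. bilin P (P f g) (frag_of h) =
         frag_extend (\<lambda>(h1, h2). bilin P (frag_of f) (cmul (P g h1) (frag_of h2))) (coprod h))"

definition magstar :: "'x forest \<Rightarrow> 'x forest \<Rightarrow> 'x tmag" where
  "magstar = (THE P. is_mag_star P)"

definition star :: "'x tmag \<Rightarrow> 'x tmag \<Rightarrow> 'x tmag" where
  "star = bilin magstar"

definition graft1 :: "'x forest \<Rightarrow> 'x tree \<Rightarrow> 'x tmag" where
  "graft1 F s = (\<Sum>i<length F. frag_of (F[i := Node (F ! i) s]))"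

text \<open>graftR F rs computes F \<curvearrowleft> (rev rs); the value on [] is never used.\<close>
fun graftR :: "'x forest \<Rightarrow> 'x tree list \<Rightarrow> 'x tmag" where
  "graftR F [] = frag_of F"
| "graftR F [s] = graft1 F s"
| "graftR F (s # t # rs) = star (graftR F (t # rs)) (frag_of [s])"

definition graft :: "'x forest \<Rightarrow> 'x forest \<Rightarrow> 'x tmag" where
  "graft F S = graftR F (rev S)"

text \<open>bt T L w: the labelled skeleton of w, with L grafted on its leftmost leaf and,
  for every internal node labelled c, T c grafted on the leftmost leaf of the right
  subtree of that node.\<close>
lemma takeWhile_len_less: "x \<in> set w \<Longrightarrow> \<not> P x \<Longrightarrow> length (takeWhile P w) < length w"
  by (induction w) auto

function bt :: "(nat \<Rightarrow> 'x tree) \<Rightarrow> 'x tree \<Rightarrow> nat list \<Rightarrow> 'x tree" where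
  "bt T L w = (if w = [] then L else
     (let m = Min (set w) in
       Node (bt T L (takeWhile (\<lambda>x. x \<noteq> m) w)) (bt T (T m) (tl (dropWhile (\<lambda>x. x \<noteq> m) w)))))"
  by pat_completeness auto
termination
proof (relation "measure (\<lambda>(T, L, w). length w)", goal_cases)
  case 1 then show ?case by simp
next
  case (2 T L w m)
  have "m \<in> set w" using 2 by simp
  then show ?case
    using takeWhile_len_less[of m w "\<lambda>x. x \<noteq> m"] by simp
next
  case (3 T L w m)
  then show ?case
    using 3 length_dropWhile_le[of "\<lambda>x. x \<noteq> m" w] by (cases w) auto
qed

definition num_orbits :: "(nat \<Rightarrow> nat) \<Rightarrow> nat \<Rightarrow> nat" where
  "num_orbits \<sigma> k = card ((\<lambda>i. orbit \<sigma> i) ` {1..k})"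

definition orbit_minima :: "(nat \<Rightarrow> nat) \<Rightarrow> nat \<Rightarrow> nat list" where
  "orbit_minima \<sigma> k = sorted_list_of_set {i \<in> {1..k}. i = Min (orbit \<sigma> i)}"

text \<open>The tree associated to the orbit with minimum o (trees of F' are indexed from 1).\<close>
definition orbit_tree :: "'x forest \<Rightarrow> (nat \<Rightarrow> nat) \<Rightarrow> nat \<Rightarrow> 'x tree" where
  "orbit_tree F' \<sigma> a =
     (let T = (\<lambda>i. F' ! (i - 1)); m = card (orbit \<sigma> a)
      in bt T (T a) (map (\<lambda>j. (\<sigma> ^^ j) a) [1..<m]))"

definition Psi :: "'x forest \<Rightarrow> (nat \<Rightarrow> nat) \<Rightarrow> 'x forest" where
  "Psi F' \<sigma> = map (orbit_tree F' \<sigma>) (orbit_minima \<sigma> (length F'))"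

end

theory Submission
  imports Defs
begin

text \<open>For a single tree \<open>y\<close> the axioms force \<open>u * y = u \<curvearrowleft> y\<close>, and then
  \<open>f * (g y) = (f * g) * y - f * (g * y)\<close> determines \<open>f * g\<close> by recursion on the length of \<open>g\<close>;
  the solution of this recursion satisfies all the defining properties, so it is the product.
  It remains to see that the right-hand side obeys the same recursion in \<open>F'\<close>. A permutation of
  \<open>{1, \<dots>, k + 1}\<close> fixing \<open>k + 1\<close> has the extra orbit \<open>{k + 1}\<close>, so it contributes the right grafting
  of \<open>T\<^bsub>k+1\<^esub>\<close> onto the corresponding term for \<open>T\<^sub>1 \<cdots> T\<^sub>k\<close>. Any other permutation is \<open>\<tau> \<circ> (i k+1)\<close>
  for unique \<open>i \<le> k\<close> and \<open>\<tau> \<in> S\<^sub>k\<close>; in cycle notation it inserts \<open>k + 1\<close> right after \<open>i\<close>, which on the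
  labelled skeleton grafts \<open>T\<^bsub>k+1\<^esub>\<close> onto \<open>T\<^sub>i\<close> and keeps the number of orbits. Its term is therefore
  the negative of the term of \<open>\<tau>\<close> for the forest with \<open>T\<^sub>i\<close> replaced by \<open>T\<^sub>i \<or> T\<^bsub>k+1\<^esub>\<close>, and summing
  over \<open>i\<close> gives \<open>F * (T\<^sub>1 \<cdots> T\<^sub>k * T\<^bsub>k+1\<^esub>)\<close>.\<close>

section \<open>Linear and bilinear extension\<close>

lemma frag_extend_cong [fundef_cong]:
  "a = b \<Longrightarrow> (\<And>x. x \<in> Poly_Mapping.keys b \<Longrightarrow> f x = g x) \<Longrightarrow> frag_extend f a = frag_extend g b"
  by (metis frag_extend_eq)

lemma keys_frag_extendE:
  assumes "x \<in> Poly_Mapping.keys (frag_extend f c)"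
  obtains u where "u \<in> Poly_Mapping.keys c" "x \<in> Poly_Mapping.keys (f u)"
  using subsetD[OF keys_frag_extend assms] by (rule UN_E)

lemma frag_extend_frag_of_id [simp]: "frag_extend frag_of a = a"
  by (rule frag_expansion[symmetric])

lemma frag_extend_add_fun: "frag_extend (\<lambda>x. f x + g x) a = frag_extend f a + frag_extend g a"
  by (simp add: frag_extend_def frag_cmul_distrib2 sum.distrib)

lemma frag_extend_cmul_fun: "frag_extend (\<lambda>x. frag_cmul c (f x)) a = frag_cmul c (frag_extend f a)"
  by (simp add: frag_extend_def frag_cmul_sum mult.commute)

lemma frag_extend_diff_fun: "frag_extend (\<lambda>x. f x - g x) a = frag_extend f a - frag_extend g a"
  using frag_extend_add_fun[of f "\<lambda>x. - g x" a] frag_extend_cmul_fun[of "-1" g a] by simp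

lemma frag_extend_frag_extend:
  "frag_extend f (frag_extend g a) = frag_extend (\<lambda>x. frag_extend f (g x)) a"
  using subset_UNIV by (induction a rule: frag_induction) (simp_all add: frag_extend_diff)

lemma frag_extend_commute:
  "frag_extend (\<lambda>u. frag_extend (H u) b) a = frag_extend (\<lambda>v. frag_extend (\<lambda>u. H u v) a) b"
  using subset_UNIV
  by (induction a rule: frag_induction) (simp_all add: frag_extend_eq_0 frag_extend_diff frag_extend_diff_fun)

definition frag_bilin :: "('a \<Rightarrow> 'b \<Rightarrow> 'c \<Rightarrow>\<^sub>0 int) \<Rightarrow> ('a \<Rightarrow>\<^sub>0 int) \<Rightarrow> ('b \<Rightarrow>\<^sub>0 int) \<Rightarrow> 'c \<Rightarrow>\<^sub>0 int" where
  "frag_bilin H a b = frag_extend (\<lambda>u. frag_extend (H u) b) a"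

lemma cmul_eq_frag_bilin: "cmul = frag_bilin (\<lambda>u v. frag_of (u @ v))"
  by (simp add: fun_eq_iff cmul_def frag_bilin_def)

lemma tens_eq_frag_bilin: "tens = frag_bilin (\<lambda>u v. frag_of (u, v))"
  by (simp add: fun_eq_iff tens_def frag_bilin_def)

lemma bilin_eq_frag_bilin: "bilin P = frag_bilin P"
  by (simp add: fun_eq_iff bilin_def frag_bilin_def)

lemma frag_bilin_of [simp]: "frag_bilin H (frag_of u) (frag_of v) = H u v"
  by (simp add: frag_bilin_def)

lemma frag_bilin_of_left: "frag_bilin H (frag_of u) b = frag_extend (H u) b"
  by (simp add: frag_bilin_def)

lemma frag_bilin_of_right: "frag_bilin H a (frag_of v) = frag_extend (\<lambda>u. H u v) a"
  by (simp add: frag_bilin_def)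

lemma frag_bilin_frag_extend_left:
  "frag_bilin H (frag_extend f a) b = frag_extend (\<lambda>x. frag_bilin H (f x) b) a"
  unfolding frag_bilin_def by (rule frag_extend_frag_extend)

lemma frag_bilin_frag_extend_right:
  "frag_bilin H a (frag_extend g b) = frag_extend (\<lambda>y. frag_bilin H a (g y)) b"
  unfolding frag_bilin_def frag_extend_frag_extend by (rule frag_extend_commute)

lemma frag_bilin_frag_extend:
  "frag_bilin H (frag_extend f a) (frag_extend g b) =
     frag_extend (\<lambda>u. frag_extend (\<lambda>v. frag_bilin H (f u) (g v)) b) a"
  by (subst frag_bilin_frag_extend_left) (simp add: frag_bilin_frag_extend_right)

lemma frag_bilin_add_left: "frag_bilin H (a + a') b = frag_bilin H a b + frag_bilin H a' b"
  by (simp add: frag_bilin_def frag_extend_add)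

lemma frag_bilin_diff_left: "frag_bilin H (a - a') b = frag_bilin H a b - frag_bilin H a' b"
  by (simp add: frag_bilin_def frag_extend_diff)

lemma frag_bilin_add_right: "frag_bilin H a (b + b') = frag_bilin H a b + frag_bilin H a b'"
  by (simp add: frag_bilin_def frag_extend_add frag_extend_add_fun)

lemma frag_bilin_diff_right: "frag_bilin H a (b - b') = frag_bilin H a b - frag_bilin H a b'"
  by (simp add: frag_bilin_def frag_extend_diff frag_extend_diff_fun)

lemma frag_extend_tens:
  "frag_extend K (tens a b) = frag_extend (\<lambda>u. frag_extend (\<lambda>v. K (u, v)) b) a"
  by (simp add: tens_eq_frag_bilin frag_bilin_def frag_extend_frag_extend)

lemma cmul_of_left: "cmul (frag_of u) b = frag_extend (\<lambda>v. frag_of (u @ v)) b"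
  by (simp add: cmul_eq_frag_bilin frag_bilin_of_left)

lemma cmul_of_right: "cmul a (frag_of v) = frag_extend (\<lambda>u. frag_of (u @ v)) a"
  by (simp add: cmul_eq_frag_bilin frag_bilin_of_right)

lemma cmul_of [simp]: "cmul (frag_of u) (frag_of v) = frag_of (u @ v)"
  by (simp add: cmul_eq_frag_bilin)

lemma tens_of_left: "tens (frag_of u) b = frag_extend (\<lambda>v. frag_of (u, v)) b"
  by (simp add: tens_eq_frag_bilin frag_bilin_of_left)

lemma tens_of_right: "tens a (frag_of v) = frag_extend (\<lambda>u. frag_of (u, v)) a"
  by (simp add: tens_eq_frag_bilin frag_bilin_of_right)

lemma tens_of [simp]: "tens (frag_of u) (frag_of v) = frag_of (u, v)"
  by (simp add: tens_eq_frag_bilin)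

lemma cmul_diff_left: "cmul (a - a') b = cmul a b - cmul a' b"
  and cmul_diff_right: "cmul a (b - b') = cmul a b - cmul a b'"
  by (simp_all add: cmul_eq_frag_bilin frag_bilin_diff_left frag_bilin_diff_right)

lemma tens_add_left: "tens (a + a') b = tens a b + tens a' b"
  and tens_add_right: "tens a (b + b') = tens a b + tens a b'"
  and tens_diff_left: "tens (a - a') b = tens a b - tens a' b"
  and tens_diff_right: "tens a (b - b') = tens a b - tens a b'"
  by (simp_all add: tens_eq_frag_bilin frag_bilin_add_left frag_bilin_add_right
      frag_bilin_diff_left frag_bilin_diff_right)

section \<open>Grafting and the deshuffle coproduct\<close>

definition graft1_lin :: "'x tree \<Rightarrow> 'x tmag \<Rightarrow> 'x tmag" where
  "graft1_lin y a = frag_extend (\<lambda>u. graft1 u y) a"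

lemma graft1_lin_of [simp]: "graft1_lin y (frag_of u) = graft1 u y"
  by (simp add: graft1_lin_def)

lemma graft1_lin_frag_extend: "graft1_lin y (frag_extend f a) = frag_extend (\<lambda>x. graft1_lin y (f x)) a"
  unfolding graft1_lin_def by (rule frag_extend_frag_extend)

lemma graft1_lin_cmul_scalar: "graft1_lin y (frag_cmul c a) = frag_cmul c (graft1_lin y a)"
  by (simp add: graft1_lin_def frag_extend_cmul)

lemma graft1_lin_sum: "graft1_lin y (\<Sum>i\<in>I. f i) = (\<Sum>i\<in>I. graft1_lin y (f i))"
  by (induction I rule: infinite_finite_induct) (auto simp: graft1_lin_def frag_extend_add)

lemma length_keys_graft1: "v \<in> Poly_Mapping.keys (graft1 u y) \<Longrightarrow> length v = length u"
  using keys_sum[of "\<lambda>i. frag_of (u[i := Node (u ! i) y])" "{..<length u}"]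
  by (auto simp: graft1_def keys_frag_of)

lemma graft1_Nil [simp]: "graft1 [] y = 0"
  by (simp add: graft1_def)

lemma graft1_Cons:
  "graft1 (t # u) y = frag_of (Node t y # u) + frag_extend (\<lambda>v. frag_of (t # v)) (graft1 u y)"
  unfolding graft1_def lessThan_Suc_eq_insert_0 length_Cons
  by (simp add: sum.reindex frag_extend_sum o_def)

lemma graft1_single [simp]: "graft1 [t] y = frag_of [Node t y]"
  by (simp add: graft1_Cons)

lemma graft1_append:
  "graft1 (u @ v) y = cmul (graft1 u y) (frag_of v) + cmul (frag_of u) (graft1 v y)"
proof (induction u)
  case Nil
  then show ?case by (simp add: cmul_of_left cmul_of_right)
next
  case (Cons t u)
  then show ?case
    by (simp add: graft1_Cons cmul_of_left cmul_of_right frag_extend_add frag_extend_frag_extend add.assoc)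
qed

lemma graft1_snoc: "graft1 (w @ [x]) y = cmul (graft1 w y) (frag_of [x]) + frag_of (w @ [Node x y])"
  by (simp add: graft1_append)

lemma graft1_lin_cmul: "graft1_lin y (cmul a b) = cmul (graft1_lin y a) b + cmul a (graft1_lin y b)"
proof -
  have "graft1_lin y (cmul a b) = frag_extend (\<lambda>u. frag_extend (\<lambda>v. graft1 (u @ v) y) b) a"
    by (simp add: cmul_def graft1_lin_frag_extend)
  also have "\<dots> = frag_bilin (\<lambda>u v. frag_of (u @ v)) (frag_extend (\<lambda>u. graft1 u y) a) (frag_extend frag_of b)
      + frag_bilin (\<lambda>u v. frag_of (u @ v)) (frag_extend frag_of a) (frag_extend (\<lambda>u. graft1 u y) b)"
    unfolding frag_bilin_frag_extend
    by (simp add: graft1_append frag_extend_add_fun cmul_eq_frag_bilin)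
  finally show ?thesis by (simp add: cmul_eq_frag_bilin graft1_lin_def)
qed

text \<open>On the tensor square, \<open>tens_snoc y\<close> is right multiplication by \<open>\<Delta> y = y \<otimes> 1 + 1 \<otimes> y\<close> and
  \<open>tens_graft1 y\<close> grafts \<open>y\<close> in either factor.\<close>

definition tens_snoc :: "'x tree \<Rightarrow> 'x tmag2 \<Rightarrow> 'x tmag2" where
  "tens_snoc y A = frag_extend (\<lambda>(a, b). frag_of (a @ [y], b) + frag_of (a, b @ [y])) A"

definition tens_graft1 :: "'x tree \<Rightarrow> 'x tmag2 \<Rightarrow> 'x tmag2" where
  "tens_graft1 y A =
     frag_extend (\<lambda>(a, b). tens (graft1 a y) (frag_of b) + tens (frag_of a) (graft1 b y)) A"

lemma tens_snoc_of [simp]: "tens_snoc y (frag_of (a, b)) = frag_of (a @ [y], b) + frag_of (a, b @ [y])"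
  by (simp add: tens_snoc_def)

lemma tens_graft1_of [simp]:
  "tens_graft1 y (frag_of (a, b)) = tens (graft1 a y) (frag_of b) + tens (frag_of a) (graft1 b y)"
  by (simp add: tens_graft1_def)

lemma tens_snoc_frag_extend: "tens_snoc y (frag_extend g A) = frag_extend (\<lambda>p. tens_snoc y (g p)) A"
  unfolding tens_snoc_def by (rule frag_extend_frag_extend)

lemma tens_graft1_frag_extend: "tens_graft1 y (frag_extend g A) = frag_extend (\<lambda>p. tens_graft1 y (g p)) A"
  unfolding tens_graft1_def by (rule frag_extend_frag_extend)

lemma tens_snoc_add: "tens_snoc y (A + B) = tens_snoc y A + tens_snoc y B"
  by (simp add: tens_snoc_def frag_extend_add)

lemma tens_snoc_diff: "tens_snoc y (A - B) = tens_snoc y A - tens_snoc y B"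
  by (simp add: tens_snoc_def frag_extend_diff)

lemma tens_snoc_tens_of_left:
  "tens_snoc y (tens (frag_of a) B) = tens (frag_of (a @ [y])) B + tens (frag_of a) (cmul B (frag_of [y]))"
  by (simp add: tens_of_left tens_snoc_frag_extend cmul_of_right frag_extend_frag_extend
      frag_extend_add_fun)

lemma tens_snoc_tens_of_right:
  "tens_snoc y (tens A (frag_of b)) = tens (cmul A (frag_of [y])) (frag_of b) + tens A (frag_of (b @ [y]))"
  by (simp add: tens_of_right tens_snoc_frag_extend cmul_of_right frag_extend_frag_extend
      frag_extend_add_fun)

lemma tens_graft1_add: "tens_graft1 y (A + B) = tens_graft1 y A + tens_graft1 y B"
  by (simp add: tens_graft1_def frag_extend_add)

lemma tens_graft1_diff: "tens_graft1 y (A - B) = tens_graft1 y A - tens_graft1 y B"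
  by (simp add: tens_graft1_def frag_extend_diff)

lemma tens_graft1_tens: "tens_graft1 y (tens a b) = tens (graft1_lin y a) b + tens a (graft1_lin y b)"
proof -
  have "tens (graft1_lin y a) b = frag_extend (\<lambda>u. frag_extend (\<lambda>v. tens (graft1 u y) (frag_of v)) b) a"
    "tens a (graft1_lin y b) = frag_extend (\<lambda>u. frag_extend (\<lambda>v. tens (frag_of u) (graft1 v y)) b) a"
    using frag_bilin_frag_extend[of "\<lambda>u v. frag_of (u, v)" "\<lambda>u. graft1 u y" a frag_of b]
      frag_bilin_frag_extend[of "\<lambda>u v. frag_of (u, v)" frag_of a "\<lambda>u. graft1 u y" b]
    by (simp_all add: tens_eq_frag_bilin graft1_lin_def)
  then show ?thesis
    by (simp add: tens_graft1_def frag_extend_tens frag_extend_add_fun)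
qed

lemma nths_cong_length:
  "(\<And>i. i < length w \<Longrightarrow> i \<in> A \<longleftrightarrow> i \<in> B) \<Longrightarrow> nths w A = nths w B"
proof (induction w arbitrary: A B)
  case (Cons x w)
  have "nths w {j. Suc j \<in> A} = nths w {j. Suc j \<in> B}"
    by (rule Cons.IH) (use Cons.prems in auto)
  moreover have "0 \<in> A \<longleftrightarrow> 0 \<in> B" using Cons.prems[of 0] by simp
  ultimately show ?case by (simp add: nths_Cons)
qed simp

lemma coprod_Nil [simp]: "coprod [] = frag_of ([], [])"
  by (simp add: coprod_def)

lemma coprod_snoc: "coprod (w @ [y]) = tens_snoc y (coprod w)"
proof -
  let ?n = "length w"
  let ?f = "\<lambda>S. frag_of (nths (w @ [y]) S, nths (w @ [y]) (- S))"
  have Pow_Suc: "Pow {0..<Suc ?n} = Pow {0..<?n} \<union> insert ?n ` Pow {0..<?n}"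
    by (simp add: atLeast0_lessThan_Suc Pow_insert)
  have inj: "inj_on (insert ?n) (Pow {0..<?n})"
    by (rule inj_onI) (metis Pow_iff atLeastLessThan_iff insert_ident less_irrefl subset_iff)
  have without_n: "?f S = frag_of (nths w S, nths w (- S) @ [y])" if "S \<subseteq> {0..<?n}" for S
    using that by (auto simp: nths_append)
  have with_n: "?f (insert ?n S) = frag_of (nths w S @ [y], nths w (- S))" if "S \<subseteq> {0..<?n}" for S
  proof -
    have "nths w (insert ?n S) = nths w S" "nths w (- insert ?n S) = nths w (- S)"
      by (rule nths_cong_length; auto)+
    then show ?thesis using that by (auto simp: nths_append)
  qed
  have "coprod (w @ [y]) = sum ?f (Pow {0..<?n}) + sum (?f \<circ> insert ?n) (Pow {0..<?n})"
    unfolding coprod_def length_append_singleton Pow_Suc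
    by (subst sum.union_disjoint) (auto simp: sum.reindex[OF inj])
  also have "\<dots> = (\<Sum>S\<in>Pow {0..<?n}. frag_of (nths w S, nths w (- S) @ [y]))
      + (\<Sum>S\<in>Pow {0..<?n}. frag_of (nths w S @ [y], nths w (- S)))"
    by (intro arg_cong2[where f = "(+)"] sum.cong) (auto simp: without_n with_n)
  also have "\<dots> = tens_snoc y (coprod w)"
    unfolding coprod_def tens_snoc_def by (simp add: frag_extend_sum o_def sum.distrib add.commute)
  finally show ?thesis .
qed

lemma coprod_single: "coprod [y] = frag_of ([y], []) + frag_of ([], [y])"
  using coprod_snoc[of "[]" y] by simp

lemma coprod_graft1: "frag_extend coprod (graft1 w y) = tens_graft1 y (coprod w)"
proof (induction w rule: rev_induct)
  case Nil
  then show ?case by (simp add: tens_eq_frag_bilin frag_bilin_def)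
next
  case (snoc x w)
  have tens_snoc_tens_graft1:
    "tens_snoc x (tens_graft1 y C) + tens_snoc (Node x y) C = tens_graft1 y (tens_snoc x C)" for C
    using subset_UNIV
  proof (induction C rule: frag_induction)
    case (one p)
    then show ?case
      by (cases p) (simp add: tens_snoc_tens_of_left tens_snoc_tens_of_right tens_snoc_add
          tens_graft1_add graft1_snoc tens_add_left tens_add_right add_ac)
  next
    case (diff A B)
    then show ?case by (simp add: tens_snoc_diff tens_graft1_diff algebra_simps)
  qed (simp add: tens_snoc_def tens_graft1_def)
  have "frag_extend coprod (cmul (graft1 w y) (frag_of [x])) = tens_snoc x (frag_extend coprod (graft1 w y))"
    by (simp add: cmul_of_right frag_extend_frag_extend tens_snoc_frag_extend coprod_snoc)
  then show ?case
    by (simp add: graft1_snoc frag_extend_add snoc coprod_snoc tens_snoc_tens_graft1)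
qed

section \<open>The product as the solution of a recursion\<close>

lemma forest_snoc_induct [case_names Nil snoc]:
  assumes "P []"
    and "\<And>g y. P g \<Longrightarrow> (\<And>v. v \<in> Poly_Mapping.keys (graft1 g y) \<Longrightarrow> P v) \<Longrightarrow> P (g @ [y])"
  shows "P h"
proof (induction h rule: length_induct)
  case (1 h)
  show ?case
  proof (cases h rule: rev_cases)
    case (snoc g y)
    have "P v" if "length v \<le> length g" for v
      using "1.IH" snoc that by simp
    then show ?thesis
      unfolding snoc by (intro assms(2)) (auto dest: length_keys_graft1)
  qed (simp add: assms(1))
qed

text \<open>The axiom \<open>f * (g y) = (f * g) * y - f * (g * y)\<close> with \<open>u * y = u \<curvearrowleft> y\<close>.\<close>

function star_rec :: "'x forest \<Rightarrow> 'x forest \<Rightarrow> 'x tmag" where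
  "star_rec f [] = frag_of f"
| "star_rec f (g @ [y]) = graft1_lin y (star_rec f g) - frag_extend (star_rec f) (graft1 g y)"
  by (metis rev_exhaust prod.exhaust) simp_all
termination
  by (relation "measure (\<lambda>(f, g). length g)") (simp_all add: length_keys_graft1)

lemma star_rec_single [simp]: "star_rec u [y] = graft1 u y"
  using star_rec.simps(2)[of u "[]" y] by simp

lemma length_keys_star_rec: "v \<in> Poly_Mapping.keys (star_rec f g) \<Longrightarrow> length v = length f"
proof (induction f g arbitrary: v rule: star_rec.induct)
  case (2 f g y)
  have "v \<in> Poly_Mapping.keys (graft1_lin y (star_rec f g))
      \<or> v \<in> Poly_Mapping.keys (frag_extend (star_rec f) (graft1 g y))"
    using subsetD[OF keys_diff "2.prems"[unfolded star_rec.simps]] by (rule UnE) simp_all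
  then show ?case
  proof
    assume "v \<in> Poly_Mapping.keys (graft1_lin y (star_rec f g))"
    then obtain u where "u \<in> Poly_Mapping.keys (star_rec f g)" "v \<in> Poly_Mapping.keys (graft1 u y)"
      unfolding graft1_lin_def by (rule keys_frag_extendE)
    then show ?thesis by (metis "2.IH"(1) length_keys_graft1)
  next
    assume "v \<in> Poly_Mapping.keys (frag_extend (star_rec f) (graft1 g y))"
    then obtain w where "w \<in> Poly_Mapping.keys (graft1 g y)" "v \<in> Poly_Mapping.keys (star_rec f w)"
      by (rule keys_frag_extendE)
    then show ?thesis by (rule "2.IH"(2))
  qed
qed (simp add: keys_frag_of)

lemma star_rec_Nil_left: "star_rec [] g = frag_cmul (counit g) (frag_of [])"
proof (induction g rule: forest_snoc_induct)
  case (snoc g y)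
  have "frag_extend (star_rec []) (graft1 g y) = 0"
  proof (rule frag_extend_eq_0)
    fix v assume v: "v \<in> Poly_Mapping.keys (graft1 g y)"
    then have "v \<noteq> []" using length_keys_graft1 by fastforce
    then show "star_rec [] v = 0" using snoc.IH(2)[OF v] by (simp add: counit_def)
  qed
  then show ?case by (simp add: snoc.IH(1) graft1_lin_cmul_scalar counit_def)
qed (simp add: counit_def)

lemma counit_lin_star_rec: "counit_lin (star_rec f g) = counit f * counit g"
proof (cases "f = []")
  case False
  then have "[] \<notin> Poly_Mapping.keys (star_rec f g)" using length_keys_star_rec by fastforce
  then show ?thesis using False by (simp add: counit_lin_def counit_def in_keys_iff)
qed (simp add: star_rec_Nil_left counit_lin_def counit_def)

definition star_rec_cmul :: "'x forest \<Rightarrow> 'x forest \<Rightarrow> 'x tmag2 \<Rightarrow> 'x tmag" where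
  "star_rec_cmul f g = frag_extend (\<lambda>(h1, h2). cmul (star_rec f h1) (star_rec g h2))"

lemma star_rec_cmul_tens:
  "star_rec_cmul f g (tens X Y) = cmul (frag_extend (star_rec f) X) (frag_extend (star_rec g) Y)"
  by (simp add: star_rec_cmul_def frag_extend_tens cmul_eq_frag_bilin frag_bilin_frag_extend)

text \<open>With \<open>coprod_snoc\<close> and \<open>coprod_graft1\<close>, this makes \<open>h \<mapsto> \<Sum> (f * h\<^sub>1) (g * h\<^sub>2)\<close> obey the
  recursion of \<open>star_rec (f @ g)\<close>; the same device proves the coproduct and associativity axioms.\<close>

lemma graft1_lin_star_rec_cmul:
  "graft1_lin y (star_rec_cmul f g C) =
     star_rec_cmul f g (tens_graft1 y C) + star_rec_cmul f g (tens_snoc y C)"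
  using subset_UNIV
proof (induction C rule: frag_induction)
  case (one p)
  show ?case
    by (cases p) (simp add: star_rec_cmul_def frag_extend_add star_rec_cmul_tens[unfolded star_rec_cmul_def]
        graft1_lin_cmul cmul_diff_left cmul_diff_right)
next
  case (diff A B)
  then show ?case
    by (simp add: star_rec_cmul_def graft1_lin_def frag_extend_diff tens_snoc_diff tens_graft1_diff)
qed (simp add: star_rec_cmul_def graft1_lin_def tens_snoc_def tens_graft1_def)

lemma star_rec_append_left: "star_rec (f @ g) h = star_rec_cmul f g (coprod h)"
proof (induction h rule: forest_snoc_induct)
  case (snoc h y)
  have "frag_extend (star_rec (f @ g)) (graft1 h y) = star_rec_cmul f g (frag_extend coprod (graft1 h y))"
    using snoc.IH(2) unfolding star_rec_cmul_def frag_extend_frag_extend by (rule frag_extend_cong[OF refl])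
  then show ?case
    by (simp add: snoc.IH(1) coprod_graft1 graft1_lin_star_rec_cmul coprod_snoc)
qed (simp add: star_rec_cmul_def)

definition star_rec2 :: "'x forest \<times> 'x forest \<Rightarrow> 'x forest \<times> 'x forest \<Rightarrow> 'x tmag2" where
  "star_rec2 p q = tens (star_rec (fst p) (fst q)) (star_rec (snd p) (snd q))"

lemma star_rec2_Pair [simp]: "star_rec2 (a1, a2) (b1, b2) = tens (star_rec a1 b1) (star_rec a2 b2)"
  by (simp add: star_rec2_def)

lemma bilin2_star_rec: "bilin2 star_rec A B = frag_bilin star_rec2 A B"
  by (simp add: bilin2_def frag_bilin_def star_rec2_def[abs_def] case_prod_unfold)

lemma frag_extend_star_rec2_tens:
  "frag_extend (star_rec2 p) (tens X Y) =
     tens (frag_extend (star_rec (fst p)) X) (frag_extend (star_rec (snd p)) Y)"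
  unfolding frag_extend_tens by (simp add: star_rec2_def tens_eq_frag_bilin frag_bilin_frag_extend)

lemma tens_graft1_frag_bilin_star_rec2:
  "tens_graft1 y (frag_bilin star_rec2 A B) =
     frag_bilin star_rec2 A (tens_graft1 y B) + frag_bilin star_rec2 A (tens_snoc y B)"
proof -
  have single: "tens_graft1 y (frag_extend (star_rec2 p) B) =
      frag_extend (star_rec2 p) (tens_graft1 y B) + frag_extend (star_rec2 p) (tens_snoc y B)" for p
    using subset_UNIV
  proof (induction B rule: frag_induction)
    case (one q)
    show ?case
      by (cases p; cases q) (simp add: frag_extend_star_rec2_tens frag_extend_add
          tens_graft1_tens tens_diff_left tens_diff_right)
  next
    case (diff A B)
    then show ?case by (simp add: frag_extend_diff tens_snoc_diff tens_graft1_diff)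
  qed (simp add: tens_snoc_def tens_graft1_def)
  show ?thesis
    using subset_UNIV
  proof (induction A rule: frag_induction)
    case (one p)
    then show ?case by (simp add: frag_bilin_of_left single)
  next
    case (diff A A')
    then show ?case by (simp add: frag_bilin_diff_left tens_graft1_diff)
  qed (simp add: tens_graft1_def frag_bilin_def)
qed

lemma coprod_star_rec: "frag_extend coprod (star_rec f g) = frag_bilin star_rec2 (coprod f) (coprod g)"
proof (induction g rule: forest_snoc_induct)
  case Nil
  have unit: "star_rec2 p ([], []) = frag_of p" for p by (cases p) simp
  show ?case by (simp add: frag_bilin_of_right unit)
next
  case (snoc g y)
  have "frag_extend coprod (graft1_lin y (star_rec f g)) =
      tens_graft1 y (frag_bilin star_rec2 (coprod f) (coprod g))"
    by (simp add: graft1_lin_def frag_extend_frag_extend coprod_graft1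
        flip: tens_graft1_frag_extend snoc.IH(1))
  moreover have "frag_extend coprod (frag_extend (star_rec f) (graft1 g y)) =
      frag_bilin star_rec2 (coprod f) (tens_graft1 y (coprod g))"
    by (simp add: frag_extend_frag_extend snoc.IH(2) frag_bilin_frag_extend_right[symmetric]
        coprod_graft1 cong: frag_extend_cong)
  ultimately show ?case
    by (simp add: frag_extend_diff tens_graft1_frag_bilin_star_rec2 coprod_snoc)
qed

lemma graft1_lin_frag_extend_star_rec:
  "graft1_lin y (frag_extend (star_rec f) Z) =
     frag_extend (star_rec f) (cmul Z (frag_of [y])) + frag_extend (star_rec f) (graft1_lin y Z)"
  by (simp add: graft1_lin_frag_extend cmul_of_right graft1_lin_def frag_extend_frag_extend
      frag_extend_add_fun[symmetric])

lemma cmul_cmul_of: "cmul (cmul a (frag_of b)) (frag_of c) = cmul a (frag_of (b @ c))"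
  by (simp add: cmul_of_right frag_extend_frag_extend)

definition star_rec_assoc :: "'x forest \<Rightarrow> 'x forest \<Rightarrow> 'x forest \<times> 'x forest \<Rightarrow> 'x tmag" where
  "star_rec_assoc f g = (\<lambda>(h1, h2). frag_extend (star_rec f) (cmul (star_rec g h1) (frag_of h2)))"

lemma frag_extend_star_rec_assoc_tens:
  "frag_extend (star_rec_assoc f g) (tens X Y) = frag_extend (star_rec f) (cmul (frag_extend (star_rec g) X) Y)"
  using frag_bilin_frag_extend[of "\<lambda>u v. frag_of (u @ v)" "star_rec g" X frag_of Y]
  by (simp add: star_rec_assoc_def frag_extend_tens cmul_eq_frag_bilin frag_extend_frag_extend)

lemma graft1_lin_star_rec_assoc:
  "graft1_lin y (frag_extend (star_rec_assoc f g) C) =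
     frag_extend (star_rec_assoc f g) (tens_graft1 y C) + frag_extend (star_rec_assoc f g) (tens_snoc y C)"
  using subset_UNIV
proof (induction C rule: frag_induction)
  case (one p)
  obtain a b where p: "p = (a, b)" by (cases p)
  define W where "W = star_rec g a"
  have "graft1_lin y (star_rec_assoc f g p) = frag_extend (star_rec f) (cmul W (frag_of (b @ [y])))
      + frag_extend (star_rec f) (cmul (graft1_lin y W) (frag_of b))
      + frag_extend (star_rec f) (cmul W (graft1 b y))"
    by (simp add: p star_rec_assoc_def W_def[symmetric] graft1_lin_frag_extend_star_rec cmul_cmul_of
        graft1_lin_cmul frag_extend_add)
  moreover have "frag_extend (star_rec_assoc f g) (tens_graft1 y (frag_of p)) =
      frag_extend (star_rec f) (cmul (frag_extend (star_rec g) (graft1 a y)) (frag_of b))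
      + frag_extend (star_rec f) (cmul W (graft1 b y))"
    by (simp add: p W_def frag_extend_add frag_extend_star_rec_assoc_tens)
  moreover have "frag_extend (star_rec_assoc f g) (tens_snoc y (frag_of p)) =
      frag_extend (star_rec f) (cmul (graft1_lin y W - frag_extend (star_rec g) (graft1 a y)) (frag_of b))
      + frag_extend (star_rec f) (cmul W (frag_of (b @ [y])))"
    by (simp add: p W_def star_rec_assoc_def frag_extend_add)
  ultimately show ?case
    by (simp add: cmul_diff_left frag_extend_diff)
next
  case (diff A B)
  then show ?case
    by (simp add: frag_extend_diff tens_snoc_diff tens_graft1_diff graft1_lin_def)
qed (simp add: tens_snoc_def tens_graft1_def graft1_lin_def)

lemma star_rec_star_rec:
  "frag_extend (\<lambda>u. star_rec u h) (star_rec f g) = frag_extend (star_rec_assoc f g) (coprod h)"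
proof (induction h rule: forest_snoc_induct)
  case Nil
  then show ?case by (simp add: star_rec_assoc_def cmul_of_right)
next
  case (snoc h y)
  have "frag_extend (\<lambda>u. frag_extend (star_rec u) (graft1 h y)) (star_rec f g)
      = frag_extend (star_rec_assoc f g) (tens_graft1 y (coprod h))"
    by (simp add: frag_extend_commute[of "\<lambda>u v. star_rec u v"] snoc.IH(2) frag_extend_frag_extend
        coprod_graft1 flip: frag_extend_frag_extend cong: frag_extend_cong)
  then show ?case
    by (simp add: frag_extend_diff_fun graft1_lin_frag_extend[symmetric] snoc.IH(1)
        graft1_lin_star_rec_assoc coprod_snoc)
qed

lemma is_mag_star_star_rec: "is_mag_star star_rec"
  unfolding is_mag_star_def
proof (intro conjI allI)
  fix f g h :: "'a forest" and y
  show "star_rec f (g @ [y]) =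
      bilin star_rec (star_rec f g) (frag_of [y]) - bilin star_rec (frag_of f) (star_rec g [y])"
    by (simp add: bilin_eq_frag_bilin frag_bilin_of_left frag_bilin_of_right graft1_lin_def)
  show "bilin star_rec (star_rec f g) (frag_of h) =
      frag_extend (\<lambda>(h1, h2). bilin star_rec (frag_of f) (cmul (star_rec g h1) (frag_of h2))) (coprod h)"
    by (simp add: bilin_eq_frag_bilin frag_bilin_of_left frag_bilin_of_right star_rec_star_rec
        star_rec_assoc_def)
qed (simp_all add: counit_lin_star_rec coprod_star_rec bilin2_star_rec star_rec_Nil_left
    star_rec_append_left star_rec_cmul_def)

lemma is_mag_star_unique:
  assumes "is_mag_star P"
  shows "P = star_rec"
proof -
  have unit: "P f [] = frag_of f" "P [] f = frag_cmul (counit f) (frag_of [])"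
    and graft: "P [t1] [t2] = frag_of [Node t1 t2]"
    and recursion: "P f (g @ [y]) = bilin P (P f g) (frag_of [y]) - bilin P (frag_of f) (P g [y])"
    and append: "P (f @ g) h = frag_extend (\<lambda>(h1, h2). cmul (P f h1) (P g h2)) (coprod h)"
    for f g h t1 t2 y
    using assms unfolding is_mag_star_def by blast+
  have single: "P u [y] = graft1 u y" for u y
  proof (induction u)
    case (Cons t u)
    have "P ([t] @ u) [y] = cmul (P [t] [y]) (P u []) + cmul (P [t] []) (P u [y])"
      using append[of "[t]" u "[y]"] by (simp add: coprod_single frag_extend_add)
    then show ?case
      by (simp add: graft unit Cons cmul_of_left graft1_Cons)
  qed (simp add: unit counit_def)
  have "P f g = star_rec f g" for f g
  proof (induction g rule: forest_snoc_induct)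
    case (snoc g y)
    then show ?case
      by (simp add: recursion bilin_eq_frag_bilin frag_bilin_of_left frag_bilin_of_right single
          graft1_lin_def cong: frag_extend_cong)
  qed (simp add: unit)
  then show ?thesis by (intro ext)
qed

lemma magstar_eq_star_rec: "magstar = star_rec"
  unfolding magstar_def using is_mag_star_star_rec is_mag_star_unique by (rule the_equality)

section \<open>Labelled skeletons\<close>

declare bt.simps [simp del]

lemma bt_Nil [simp]: "bt T L [] = L"
  by (simp add: bt.simps)

lemma bt_Min_split:
  assumes "m \<notin> set a" "m = Min (set (a @ m # b))"
  shows "bt T L (a @ m # b) = Node (bt T L a) (bt T (T m) b)"
proof -
  have "takeWhile (\<lambda>x. x \<noteq> m) (a @ m # b) = a" "dropWhile (\<lambda>x. x \<noteq> m) (a @ m # b) = m # b"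
    using assms(1) by (induction a) auto
  then show ?thesis
    using assms(2) by (subst bt.simps) (simp add: Let_def)
qed

lemma bt_cong: "(\<And>x. x \<in> set w \<Longrightarrow> T x = T' x) \<Longrightarrow> L = L' \<Longrightarrow> bt T L w = bt T' L' w"
proof (induction w arbitrary: L L' rule: length_induct)
  case (1 w)
  show ?case
  proof (cases "w = []")
    case True then show ?thesis using "1.prems" by simp
  next
    case False
    define m where "m = Min (set w)"
    have "m \<in> set w" using False m_def by simp
    then obtain a b where w: "w = a @ m # b" "m \<notin> set a" using split_list_first by metis
    have mm: "m = Min (set (a @ m # b))" using m_def w by simp
    have "bt T L (a @ m # b) = Node (bt T L a) (bt T (T m) b)" by (rule bt_Min_split[OF w(2) mm])
    also have "bt T L a = bt T' L' a"
      using "1.IH"[rule_format, of a] "1.prems" w by simp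
    also have "bt T (T m) b = bt T' (T' m) b"
      using "1.IH"[rule_format, of b] "1.prems" w by simp
    also have "Node (bt T' L' a) (bt T' (T' m) b) = bt T' L' (a @ m # b)"
      by (rule bt_Min_split[OF w(2) mm, symmetric])
    finally show ?thesis using w by simp
  qed
qed

text \<open>A leading label larger than all others becomes the lowest node on the left branch, with
  the two leaves \<open>L\<close> and \<open>T N\<close> below it; together they act as the single leaf \<open>Node L (T N)\<close>.\<close>

lemma bt_Cons_greater:
  assumes "\<forall>x\<in>set v. x < N"
  shows "bt T L (N # v) = bt T (Node L (T N)) v"
  using assms
proof (induction v arbitrary: L rule: length_induct)
  case (1 v)
  show ?case
  proof (cases "v = []")
    case True
    then show ?thesis using bt_Min_split[of N "[]" "[]" T L] by simp
  next
    case False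
    define m where "m = Min (set v)"
    have "m \<in> set v" using False m_def by simp
    then obtain a b where w: "v = a @ m # b" "m \<notin> set a" using split_list_first by metis
    have mN: "m < N" using "1.prems" \<open>m \<in> set v\<close> by auto
    have mm1: "m = Min (set ((N # a) @ m # b))"
    proof (rule Min_eqI[symmetric])
      fix y assume "y \<in> set ((N # a) @ m # b)"
      then have "y = N \<or> y \<in> set v" using w by auto
      then show "m \<le> y" using mN m_def by auto
    qed (auto)
    have mm2: "m = Min (set (a @ m # b))" using m_def w by simp
    have "bt T L (N # v) = bt T L ((N # a) @ m # b)" using w by simp
    also have "\<dots> = Node (bt T L (N # a)) (bt T (T m) b)"
      by (rule bt_Min_split) (use w mN mm1 in auto)
    also have "bt T L (N # a) = bt T (Node L (T N)) a"
      using "1.IH"[rule_format, of a] "1.prems" w by simp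
    also have "Node (bt T (Node L (T N)) a) (bt T (T m) b) = bt T (Node L (T N)) v"
      unfolding w by (rule bt_Min_split[OF w(2) mm2, symmetric])
    finally show ?thesis .
  qed
qed

text \<open>The same happens to the word following \<open>i\<close>, whose leftmost leaf carries \<open>T i\<close>.\<close>

lemma bt_insert_greater:
  assumes "i \<notin> set u" "i \<notin> set v" "i < N" "\<forall>x\<in>set u \<union> set v. x < N"
  shows "bt T L (u @ i # N # v) = bt (T(i := Node (T i) (T N))) L (u @ i # v)"
  using assms
proof (induction "length (u @ v)" arbitrary: u v L rule: less_induct)
  case less
  define T' where "T' = T(i := Node (T i) (T N))"
  define m where "m = Min (set (u @ i # v))"
  have mw': "m \<in> set (u @ i # v)" unfolding m_def by (rule Min_in) auto
  have mNle: "m < N" using mw' less.prems by auto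
  have mw: "m = Min (set (u @ i # N # v))"
  proof (rule Min_eqI[symmetric])
    fix y assume "y \<in> set (u @ i # N # v)"
    then have "y = N \<or> y \<in> set (u @ i # v)" by auto
    then show "m \<le> y" using mNle m_def by auto
  qed (use mw' in auto)
  show ?case
  proof (cases "m \<in> set u")
    case True
    then obtain u1 u2 where u: "u = u1 @ m # u2" "m \<notin> set u1" using split_list_first by metis
    have "bt T L (u @ i # N # v) = bt T L (u1 @ m # (u2 @ i # N # v))" using u by simp
    also have "\<dots> = Node (bt T L u1) (bt T (T m) (u2 @ i # N # v))"
    proof (rule bt_Min_split)
      show "m \<notin> set u1" by (rule u(2))
      have eq: "u1 @ m # (u2 @ i # N # v) = u @ i # N # v" using u by simp
      show "m = Min (set (u1 @ m # u2 @ i # N # v))" unfolding eq by (rule mw)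
    qed
    also have "bt T (T m) (u2 @ i # N # v) = bt T' (T m) (u2 @ i # v)"
      unfolding T'_def by (rule less.hyps) (use less.prems u in auto)
    also have "bt T L u1 = bt T' L u1"
      by (rule bt_cong) (use less.prems u T'_def in auto)
    also have "T m = T' m" using less.prems u T'_def by auto
    also have "Node (bt T' L u1) (bt T' (T' m) (u2 @ i # v)) = bt T' L (u1 @ m # (u2 @ i # v))"
    proof (rule bt_Min_split[symmetric])
      show "m \<notin> set u1" by (rule u(2))
      have eq: "u1 @ m # (u2 @ i # v) = u @ i # v" using u by simp
      show "m = Min (set (u1 @ m # u2 @ i # v))" unfolding eq by (rule m_def)
    qed
    finally show ?thesis using u T'_def by simp
  next
    case False
    show ?thesis
    proof (cases "m = i")
      case True
      have "bt T L (u @ i # N # v) = Node (bt T L u) (bt T (T i) (N # v))"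
        by (rule bt_Min_split) (use less.prems in simp, use mw True in simp)
      also have "bt T (T i) (N # v) = bt T (Node (T i) (T N)) v"
        by (rule bt_Cons_greater) (use less.prems in auto)
      also have "bt T (Node (T i) (T N)) v = bt T' (T' i) v"
        by (rule bt_cong) (use less.prems T'_def in auto)
      also have "bt T L u = bt T' L u"
        by (rule bt_cong) (use less.prems T'_def in auto)
      also have "Node (bt T' L u) (bt T' (T' i) v) = bt T' L (u @ i # v)"
        by (rule bt_Min_split[symmetric]) (use less.prems in simp, use m_def True in simp)
      finally show ?thesis using T'_def by simp
    next
      case mi: False
      then have "m \<in> set v" using mw' False by auto
      then obtain v1 v2 where v: "v = v1 @ m # v2" "m \<notin> set v1" using split_list_first by metis
      have "bt T L (u @ i # N # v) = bt T L ((u @ i # N # v1) @ m # v2)" using v by simp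
      also have "\<dots> = Node (bt T L (u @ i # N # v1)) (bt T (T m) v2)"
      proof (rule bt_Min_split)
        show "m \<notin> set (u @ i # N # v1)" using v False mi mNle by auto
        have eq: "(u @ i # N # v1) @ m # v2 = u @ i # N # v" using v by simp
        show "m = Min (set ((u @ i # N # v1) @ m # v2))" unfolding eq by (rule mw)
      qed
      also have "bt T L (u @ i # N # v1) = bt T' L (u @ i # v1)"
        unfolding T'_def by (rule less.hyps) (use less.prems v in auto)
      also have "bt T (T m) v2 = bt T' (T' m) v2"
        by (rule bt_cong) (use less.prems v T'_def mi in auto)
      also have "Node (bt T' L (u @ i # v1)) (bt T' (T' m) v2) = bt T' L ((u @ i # v1) @ m # v2)"
      proof (rule bt_Min_split[symmetric])
        show "m \<notin> set (u @ i # v1)" using v False mi by auto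
        have eq: "(u @ i # v1) @ m # v2 = u @ i # v" using v by simp
        show "m = Min (set ((u @ i # v1) @ m # v2))" unfolding eq by (rule m_def)
      qed
      finally show ?thesis using v T'_def by simp
    qed
  qed
qed


lemma bt_tl_insert_greater:
  fixes T :: "nat \<Rightarrow> 'x tree"
  assumes "distinct (u @ i # v)" "\<forall>x\<in>set (u @ i # v). x < N"
  defines "T' \<equiv> T(i := Node (T i) (T N))"
  shows "bt T (T (hd (u @ i # v))) (tl (u @ i # N # v)) = bt T' (T' (hd (u @ i # v))) (tl (u @ i # v))"
proof (cases u)
  case Nil
  have "bt T (T i) (N # v) = bt T (T' i) v"
    using assms by (simp add: bt_Cons_greater)
  also have "\<dots> = bt T' (T' i) v"
    using assms(1) Nil by (intro bt_cong) (auto simp: T'_def)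
  finally show ?thesis using Nil by simp
next
  case (Cons x u')
  then have "bt T (T x) (u' @ i # N # v) = bt T' (T x) (u' @ i # v)"
    using assms unfolding T'_def by (intro bt_insert_greater) auto
  then show ?thesis using Cons assms(1) by (simp add: T'_def)
qed

section \<open>Cycles of permutations\<close>

lemma card_orbit_eq_funpow_dist1:
  assumes "a \<in> orbit f a"
  shows "card (orbit f a) = funpow_dist1 f a a"
  using card_image[OF inj_on_funpow_dist1[OF assms]] orbit_conv_funpow_dist1[OF assms] by simp

lemma card_orbit_eqI:
  assumes "(f ^^ L) a = a" "0 < L" "\<And>j. 0 < j \<Longrightarrow> j < L \<Longrightarrow> (f ^^ j) a \<noteq> a"
  shows "card (orbit f a) = L"
proof -
  have a: "a \<in> orbit f a"
    using assms(1,2) unfolding orbit_altdef by (auto intro!: exI[of _ L])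
  have "funpow_dist1 f a a \<le> L"
    using funpow_dist1_le_self[OF assms(1,2) a] .
  moreover have "\<not> funpow_dist1 f a a < L"
    using assms(3)[of "funpow_dist1 f a a"] funpow_dist1_prop[OF a] by auto
  ultimately show ?thesis
    using card_orbit_eq_funpow_dist1[OF a] by simp
qed

lemma
  assumes "permutation f"
  shows card_orbit_pos: "0 < card (orbit f a)"
    and funpow_card_orbit: "(f ^^ card (orbit f a)) a = a"
    and funpow_below_card_orbit: "0 < j \<Longrightarrow> j < card (orbit f a) \<Longrightarrow> (f ^^ j) a \<noteq> a"
  using card_orbit_eq_funpow_dist1[OF permutation_self_in_orbit[OF assms]]
    funpow_dist1_prop[OF permutation_self_in_orbit[OF assms]] funpow_dist1_least[of j f a a]
  by simp_all

text \<open>The word \<open>c\<^sub>2 c\<^sub>3 \<dots> c\<^sub>m\<close> of an orbit in the definition of \<open>\<Psi>\<close> is the tail of its cycle list.\<close>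

definition cycle_list :: "('a \<Rightarrow> 'a) \<Rightarrow> 'a \<Rightarrow> 'a list" where
  "cycle_list f a = map (\<lambda>j. (f ^^ j) a) [0..<card (orbit f a)]"

lemma orbit_tree_cycle_list:
  "orbit_tree F' \<sigma> a = bt (\<lambda>i. F' ! (i - 1)) (F' ! (a - 1)) (tl (cycle_list \<sigma> a))"
  by (simp add: orbit_tree_def cycle_list_def Let_def flip: map_tl)

lemma
  assumes "permutation f"
  shows set_cycle_list: "set (cycle_list f a) = orbit f a"
    and distinct_cycle_list: "distinct (cycle_list f a)"
    and cycle_list_Cons: "cycle_list f a = a # tl (cycle_list f a)"
proof -
  have a: "a \<in> orbit f a" by (rule permutation_self_in_orbit[OF assms])
  show "set (cycle_list f a) = orbit f a"
    unfolding cycle_list_def card_orbit_eq_funpow_dist1[OF a]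
    by (simp only: set_map set_upt orbit_conv_funpow_dist1[OF a])
  show "distinct (cycle_list f a)"
    unfolding cycle_list_def card_orbit_eq_funpow_dist1[OF a]
    by (simp only: distinct_map distinct_upt set_upt inj_on_funpow_dist1[OF a] simp_thms)
  show "cycle_list f a = a # tl (cycle_list f a)"
    using card_orbit_pos[OF assms, of a] by (simp add: cycle_list_def upt_conv_Cons)
qed

lemma set_tl_cycle_list: "permutation f \<Longrightarrow> set (tl (cycle_list f a)) \<subseteq> orbit f a"
  by (metis cycle_list_Cons set_cycle_list set_subset_Cons)

lemma funpow_dist_less_card_orbit:
  assumes "permutation f" "b \<in> orbit f a"
  shows "funpow_dist f a b < card (orbit f a)"
proof -
  have "b \<in> set (cycle_list f a)" using set_cycle_list[OF assms(1)] assms(2) by simp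
  then obtain q where q: "q < card (orbit f a)" "(f ^^ q) a = b" by (auto simp: cycle_list_def)
  then have "funpow_dist f a b \<le> q" unfolding funpow_dist_def by (intro Least_le)
  with q show ?thesis by simp
qed

lemma funpow_eq_iff_funpow_dist:
  assumes "permutation f" "b \<in> orbit f a" "j < card (orbit f a)"
  shows "(f ^^ j) a = b \<longleftrightarrow> j = funpow_dist f a b"
proof -
  have inj: "inj_on (\<lambda>j. (f ^^ j) a) {0..<card (orbit f a)}"
    using distinct_cycle_list[OF assms(1), of a] by (simp add: cycle_list_def distinct_map)
  show ?thesis
    using inj_onD[OF inj, of j "funpow_dist f a b"] funpow_dist_less_card_orbit[OF assms(1,2)]
      funpow_dist_prop[OF assms(2)] assms(3)
    by auto
qed

section \<open>Inserting a new point into a cycle\<close>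

lemma permutation_orbit_eq_of_mem: "permutation f \<Longrightarrow> b \<in> orbit f a \<Longrightarrow> orbit f b = orbit f a"
  by (metis cyclic_on_orbit' orbit_cyclic_eq3)

lemma num_orbits_eq_card_minima:
  assumes "f permutes {1..n}"
  shows "num_orbits f n = card {x \<in> {1..n}. x = Min (orbit f x)}"
proof -
  let ?S = "{x \<in> {1..n}. x = Min (orbit f x)}"
  have perm: "permutation f" using assms permutation_permutes by blast
  have "orbit f x \<in> orbit f ` ?S" if x: "x \<in> {1..n}" for x
  proof -
    have sub: "orbit f x \<subseteq> {1..n}" by (rule permutes_orbit_subset[OF assms x])
    define m where "m = Min (orbit f x)"
    have m_in: "m \<in> orbit f x"
      unfolding m_def by (rule Min_in) (simp_all add: finite_subset[OF sub] orbit_nonempty)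
    have "orbit f m = orbit f x" by (rule permutation_orbit_eq_of_mem[OF perm m_in])
    moreover have "m \<in> ?S" using sub m_in calculation m_def by auto
    ultimately show ?thesis by (intro image_eqI[of _ _ m]) simp_all
  qed
  then have "orbit f ` {1..n} = orbit f ` ?S" by (intro subset_antisym image_subsetI) auto
  moreover have "inj_on (orbit f) ?S" by (intro inj_onI) (metis (mono_tags, lifting) mem_Collect_eq)
  ultimately show ?thesis
    by (simp add: num_orbits_def card_image)
qed

context
  fixes \<tau> :: "nat \<Rightarrow> nat" and n i :: nat
  assumes \<tau>: "\<tau> permutes {1..n}" and i: "i \<in> {1..n}"
begin

private lemma perm_\<tau>: "permutation \<tau>"
  using \<tau> permutation_permutes by blast

lemma compose_transpose_permutes: "\<tau> \<circ> transpose i (Suc n) permutes {1..Suc n}"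
proof (rule permutes_compose)
  show "transpose i (Suc n) permutes {1..Suc n}" by (rule permutes_swap_id) (use i in auto)
  show "\<tau> permutes {1..Suc n}" by (rule permutes_subset[OF \<tau>]) auto
qed

private lemma perm_\<sigma>: "permutation (\<tau> \<circ> transpose i (Suc n))"
  using compose_transpose_permutes permutation_permutes by blast

lemma funpow_compose_transpose_off_orbit:
  assumes "x \<in> {1..n}" "x \<notin> orbit \<tau> i"
  shows "((\<tau> \<circ> transpose i (Suc n)) ^^ j) x = (\<tau> ^^ j) x"
proof (induction j)
  case (Suc j)
  have "(\<tau> ^^ j) x \<in> orbit \<tau> x"
    by (rule funpow_in_orbit[OF permutation_self_in_orbit[OF perm_\<tau>]])
  moreover have "x \<in> orbit \<tau> b" if "b \<in> orbit \<tau> x" for b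
    using permutation_orbit_eq_of_mem[OF perm_\<tau> that] permutation_self_in_orbit[OF perm_\<tau>] by blast
  ultimately have "(\<tau> ^^ j) x \<in> {1..n}" "(\<tau> ^^ j) x \<noteq> i"
    using permutes_orbit_subset[OF \<tau> assms(1)] assms(2) by auto
  then show ?case using Suc by (simp add: transpose_apply_other)
qed simp

lemma orbit_compose_transpose_off_orbit:
  assumes "x \<in> {1..n}" "x \<notin> orbit \<tau> i"
  shows "orbit (\<tau> \<circ> transpose i (Suc n)) x = orbit \<tau> x"
  unfolding orbit_altdef by (simp only: funpow_compose_transpose_off_orbit[OF assms])

lemma cycle_list_compose_transpose_off_orbit:
  assumes "x \<in> {1..n}" "x \<notin> orbit \<tau> i"
  shows "cycle_list (\<tau> \<circ> transpose i (Suc n)) x = cycle_list \<tau> x"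
  unfolding cycle_list_def
  by (simp only: orbit_compose_transpose_off_orbit[OF assms] funpow_compose_transpose_off_orbit[OF assms])

lemma funpow_compose_transpose_on_orbit:
  assumes a: "a \<in> orbit \<tau> i"
  defines "p \<equiv> funpow_dist \<tau> a i"
  shows funpow_compose_transpose_before: "j \<le> p \<Longrightarrow> ((\<tau> \<circ> transpose i (Suc n)) ^^ j) a = (\<tau> ^^ j) a"
    and funpow_compose_transpose_new: "((\<tau> \<circ> transpose i (Suc n)) ^^ Suc p) a = Suc n"
    and funpow_compose_transpose_after:
      "p < j \<Longrightarrow> j \<le> card (orbit \<tau> a) \<Longrightarrow> ((\<tau> \<circ> transpose i (Suc n)) ^^ Suc j) a = (\<tau> ^^ j) a"
proof -
  define \<sigma> where "\<sigma> = \<tau> \<circ> transpose i (Suc n)"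
  have \<sigma>_apply: "\<sigma> x = \<tau> (transpose i (Suc n) x)" for x
    by (simp add: \<sigma>_def)
  have i_orbit: "i \<in> orbit \<tau> a"
    using a permutation_orbit_eq_of_mem[OF perm_\<tau>] permutation_self_in_orbit[OF perm_\<tau>] by blast
  have p_less: "p < card (orbit \<tau> a)"
    unfolding p_def by (rule funpow_dist_less_card_orbit[OF perm_\<tau> i_orbit])
  have p: "(\<tau> ^^ p) a = i" unfolding p_def by (rule funpow_dist_prop[OF i_orbit])
  have transpose_other: "transpose i (Suc n) ((\<tau> ^^ j) a) = (\<tau> ^^ j) a"
    if "j < card (orbit \<tau> a)" "j \<noteq> p" for j
  proof -
    have "(\<tau> ^^ j) a \<in> {1..n}"
      using permutes_orbit_subset[OF \<tau> i] funpow_in_orbit[OF a] by blast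
    then show ?thesis
      using that funpow_eq_iff_funpow_dist[OF perm_\<tau> i_orbit] by (simp add: p_def transpose_apply_other)
  qed
  have \<tau>_new: "\<tau> (Suc n) = Suc n"
    using permutes_not_in[OF \<tau>] by simp
  have before: "(\<sigma> ^^ j) a = (\<tau> ^^ j) a" if "j \<le> p" for j
    using that p_less by (induction j) (simp_all add: \<sigma>_apply transpose_other)
  have new: "(\<sigma> ^^ Suc p) a = Suc n"
    using before[OF order_refl] p by (simp add: \<sigma>_apply \<tau>_new)
  have after: "(\<sigma> ^^ Suc j) a = (\<tau> ^^ j) a" if "p < j" "j \<le> card (orbit \<tau> a)" for j
    using that
  proof (induction j)
    case (Suc j)
    show ?case
    proof (cases "j = p")
      case True
      have "(\<sigma> ^^ Suc (Suc p)) a = \<sigma> ((\<sigma> ^^ Suc p) a)" by simp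
      also have "\<dots> = (\<tau> ^^ Suc p) a" using new p by (simp add: \<sigma>_def)
      finally show ?thesis using True by simp
    next
      case False
      then show ?thesis using Suc by (simp add: \<sigma>_apply transpose_other)
    qed
  qed simp
  show "j \<le> p \<Longrightarrow> ((\<tau> \<circ> transpose i (Suc n)) ^^ j) a = (\<tau> ^^ j) a"
    using before unfolding \<sigma>_def .
  show "((\<tau> \<circ> transpose i (Suc n)) ^^ Suc p) a = Suc n"
    using new unfolding \<sigma>_def .
  show "p < j \<Longrightarrow> j \<le> card (orbit \<tau> a) \<Longrightarrow> ((\<tau> \<circ> transpose i (Suc n)) ^^ Suc j) a = (\<tau> ^^ j) a"
    using after unfolding \<sigma>_def .
qed

lemma card_orbit_compose_transpose_on_orbit:
  assumes a: "a \<in> orbit \<tau> i"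
  shows "card (orbit (\<tau> \<circ> transpose i (Suc n)) a) = Suc (card (orbit \<tau> a))"
proof -
  define p where "p = funpow_dist \<tau> a i"
  have i_orbit: "i \<in> orbit \<tau> a"
    using a permutation_orbit_eq_of_mem[OF perm_\<tau>] permutation_self_in_orbit[OF perm_\<tau>] by blast
  have p_less: "p < card (orbit \<tau> a)"
    unfolding p_def by (rule funpow_dist_less_card_orbit[OF perm_\<tau> i_orbit])
  show ?thesis
  proof (rule card_orbit_eqI)
    show "((\<tau> \<circ> transpose i (Suc n)) ^^ Suc (card (orbit \<tau> a))) a = a"
      using funpow_compose_transpose_after[OF a, of "card (orbit \<tau> a)"] p_less funpow_card_orbit[OF perm_\<tau>]
      by (simp add: p_def)
    show "((\<tau> \<circ> transpose i (Suc n)) ^^ j) a \<noteq> a" if "0 < j" "j < Suc (card (orbit \<tau> a))" for j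
    proof -
      have no_return: "(\<tau> ^^ k) a \<noteq> a" if "0 < k" "k < card (orbit \<tau> a)" for k
        using funpow_below_card_orbit[OF perm_\<tau>] that by simp
      have "Suc n \<noteq> a" using permutes_orbit_subset[OF \<tau> i] a by auto
      consider "j \<le> p" | "j = Suc p" | k where "j = Suc k" "p < k"
        by (metis not_less_eq_eq Suc_le_eq le_neq_implies_less less_Suc_eq_0_disj nat_neq_iff)
      then show ?thesis
      proof cases
        case 1
        then show ?thesis
          using funpow_compose_transpose_before[OF a] no_return[of j] that p_less by (simp add: p_def)
      next
        case 2
        then show ?thesis using funpow_compose_transpose_new[OF a] \<open>Suc n \<noteq> a\<close> by (simp add: p_def)
      next
        case 3
        then show ?thesis
          using funpow_compose_transpose_after[OF a, of k] no_return[of k] that by (simp add: p_def)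
      qed
    qed
  qed simp
qed

text \<open>In cycle notation, \<open>\<tau> \<circ> (i N)\<close> is \<open>\<tau>\<close> with the new point \<open>N\<close> inserted right after \<open>i\<close>
  in the cycle of \<open>i\<close>.\<close>

lemma cycle_list_compose_transpose_on_orbit:
  assumes a: "a \<in> orbit \<tau> i"
  obtains u v where "cycle_list \<tau> a = u @ i # v"
    and "cycle_list (\<tau> \<circ> transpose i (Suc n)) a = u @ i # Suc n # v"
proof -
  define \<sigma> where "\<sigma> = \<tau> \<circ> transpose i (Suc n)"
  define p where "p = funpow_dist \<tau> a i"
  define L where "L = card (orbit \<tau> a)"
  note before = funpow_compose_transpose_before[OF a, folded \<sigma>_def p_def]
  note new = funpow_compose_transpose_new[OF a, folded \<sigma>_def p_def]
  note after = funpow_compose_transpose_after[OF a, folded \<sigma>_def p_def L_def]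
  have i_orbit: "i \<in> orbit \<tau> a"
    using a permutation_orbit_eq_of_mem[OF perm_\<tau>] permutation_self_in_orbit[OF perm_\<tau>] by blast
  have "p < L" unfolding p_def L_def by (rule funpow_dist_less_card_orbit[OF perm_\<tau> i_orbit])
  have p: "(\<tau> ^^ p) a = i" unfolding p_def by (rule funpow_dist_prop[OF i_orbit])
  have "[0..<Suc L] = [0..<p] @ p # Suc p # map Suc [Suc p..<L]"
    using upt_add_eq_append[of 0 p "Suc L - p"] \<open>p < L\<close> by (simp add: upt_conv_Cons map_Suc_upt)
  moreover have "map (\<lambda>j. (\<sigma> ^^ j) a) [0..<p] = map (\<lambda>j. (\<tau> ^^ j) a) [0..<p]"
    by (rule map_cong) (simp_all add: before)
  moreover have "map (\<lambda>j. (\<sigma> ^^ j) a) (map Suc [Suc p..<L]) = map (\<lambda>j. (\<tau> ^^ j) a) [Suc p..<L]"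
    unfolding map_map o_def by (rule map_cong[OF refl]) (rule after; simp)
  ultimately have "cycle_list \<sigma> a =
      map (\<lambda>j. (\<tau> ^^ j) a) [0..<p] @ i # Suc n # map (\<lambda>j. (\<tau> ^^ j) a) [Suc p..<L]"
    using before[OF order_refl] new p
    by (simp add: cycle_list_def card_orbit_compose_transpose_on_orbit[OF a, folded \<sigma>_def] L_def)
  moreover have "[0..<L] = [0..<p] @ p # [Suc p..<L]"
    using upt_add_eq_append[of 0 p "L - p"] \<open>p < L\<close> by (simp add: upt_conv_Cons)
  then have "cycle_list \<tau> a = map (\<lambda>j. (\<tau> ^^ j) a) [0..<p] @ i # map (\<lambda>j. (\<tau> ^^ j) a) [Suc p..<L]"
    using p by (simp add: cycle_list_def L_def)
  ultimately show ?thesis using that \<sigma>_def by blast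
qed

lemma orbit_compose_transpose_on_orbit:
  assumes "x \<in> orbit \<tau> i"
  shows "orbit (\<tau> \<circ> transpose i (Suc n)) x = insert (Suc n) (orbit \<tau> x)"
proof -
  obtain u v where "cycle_list \<tau> x = u @ i # v"
    "cycle_list (\<tau> \<circ> transpose i (Suc n)) x = u @ i # Suc n # v"
    by (rule cycle_list_compose_transpose_on_orbit[OF assms])
  then show ?thesis
    using set_cycle_list[OF perm_\<tau>, of x] set_cycle_list[OF perm_\<sigma>, of x] by auto
qed

lemma orbit_minima_set_compose_transpose:
  "{x \<in> {1..Suc n}. x = Min (orbit (\<tau> \<circ> transpose i (Suc n)) x)} = {x \<in> {1..n}. x = Min (orbit \<tau> x)}"
proof -
  let ?\<sigma> = "\<tau> \<circ> transpose i (Suc n)"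
  have same_Min: "Min (orbit ?\<sigma> x) = Min (orbit \<tau> x)" if x: "x \<in> {1..n}" for x
  proof (cases "x \<in> orbit \<tau> i")
    case True
    have sub: "orbit \<tau> x \<subseteq> {1..n}" by (rule permutes_orbit_subset[OF \<tau> x])
    then have "finite (orbit \<tau> x)" "Min (orbit \<tau> x) < Suc n"
      using finite_subset Min_in[of "orbit \<tau> x"] orbit_nonempty[of \<tau> x] by fastforce+
    then show ?thesis
      using orbit_compose_transpose_on_orbit[OF True] by (simp add: Min_insert orbit_nonempty)
  qed (simp add: orbit_compose_transpose_off_orbit[OF x])
  have "?\<sigma> i = Suc n" using permutes_not_in[OF \<tau>] by simp
  then have "Suc n \<in> orbit ?\<sigma> i" by (metis orbit.base)
  then have "i \<in> orbit ?\<sigma> (Suc n)"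
    using permutation_orbit_eq_of_mem[OF perm_\<sigma>] permutation_self_in_orbit[OF perm_\<sigma>] by blast
  moreover have "finite (orbit ?\<sigma> (Suc n))"
    by (rule finite_orbit[OF permutation_self_in_orbit[OF perm_\<sigma>]])
  ultimately have "Min (orbit ?\<sigma> (Suc n)) \<le> i" by (intro Min_le)
  then have "Min (orbit ?\<sigma> (Suc n)) < Suc n" using i by simp
  then show ?thesis
    using same_Min by (auto simp: le_Suc_eq)
qed

lemma orbit_tree_compose_transpose:
  fixes G :: "'x forest"
  assumes "length G = n" "x \<in> {1..n}"
  shows "orbit_tree (G @ [y]) (\<tau> \<circ> transpose i (Suc n)) x =
    orbit_tree (G[i - 1 := Node (G ! (i - 1)) y]) \<tau> x"
proof -
  define Ts where "Ts = (\<lambda>x. (G @ [y]) ! (x - 1))"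
  define Tt where "Tt = (\<lambda>x. (G[i - 1 := Node (G ! (i - 1)) y]) ! (x - 1))"
  define Ts' where "Ts' = Ts(i := Node (Ts i) (Ts (Suc n)))"
  have Ts_Tt: "Ts z = Tt z" if "z \<in> {1..n}" "z \<noteq> i" for z
    using that i assms(1) by (auto simp: Ts_def Tt_def nth_append nth_list_update)
  have Tt_i: "Tt i = Node (Ts i) (Ts (Suc n))"
    using i assms(1) by (auto simp: Ts_def Tt_def nth_append nth_list_update)
  have Tt_eq: "Tt z = Ts' z" if "z \<in> {1..n}" for z
    using Ts_Tt[OF that] Tt_i by (cases "z = i") (simp_all add: Ts'_def)
  have orbit_n: "orbit \<tau> x \<subseteq> {1..n}" by (rule permutes_orbit_subset[OF \<tau> assms(2)])
  have x_orbit: "x \<in> orbit \<tau> x" by (rule permutation_self_in_orbit[OF perm_\<tau>])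
  have "bt Ts (Ts x) (tl (cycle_list (\<tau> \<circ> transpose i (Suc n)) x)) = bt Tt (Tt x) (tl (cycle_list \<tau> x))"
  proof (cases "x \<in> orbit \<tau> i")
    case False
    then have "i \<notin> orbit \<tau> x"
      using permutation_orbit_eq_of_mem[OF perm_\<tau>] x_orbit by blast
    then have same: "Ts z = Tt z" if "z \<in> orbit \<tau> x" for z
      using that orbit_n Tt_eq[of z] by (auto simp: Ts'_def)
    show ?thesis
      unfolding cycle_list_compose_transpose_off_orbit[OF assms(2) False]
    proof (rule bt_cong)
      show "Ts z = Tt z" if "z \<in> set (tl (cycle_list \<tau> x))" for z
        using that set_tl_cycle_list[OF perm_\<tau>, of x] same by blast
    qed (rule same[OF x_orbit])
  next
    case True
    obtain u v where uv: "cycle_list \<tau> x = u @ i # v"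
      "cycle_list (\<tau> \<circ> transpose i (Suc n)) x = u @ i # Suc n # v"
      by (rule cycle_list_compose_transpose_on_orbit[OF True])
    have x: "x = hd (u @ i # v)" using arg_cong[OF cycle_list_Cons[OF perm_\<tau>, of x], of hd] by (simp only: uv list.sel(1))
    have dist: "distinct (u @ i # v)" and uv_n: "set (u @ i # v) \<subseteq> {1..n}"
      using distinct_cycle_list[OF perm_\<tau>, of x] set_cycle_list[OF perm_\<tau>, of x] orbit_n uv
      by simp_all
    have below: "\<forall>z\<in>set (u @ i # v). z < Suc n" using uv_n by auto
    have "bt Ts (Ts x) (tl (u @ i # Suc n # v)) = bt Ts' (Ts' x) (tl (u @ i # v))"
      using dist below unfolding Ts'_def x by (rule bt_tl_insert_greater[of u i v "Suc n" Ts])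
    also have "\<dots> = bt Tt (Tt x) (tl (u @ i # v))"
    proof (rule bt_cong)
      show "Ts' z = Tt z" if "z \<in> set (tl (u @ i # v))" for z
        using that uv_n Tt_eq list.set_sel(2)[of "u @ i # v" z] by auto
    qed (use Tt_eq assms(2) in simp)
    finally show ?thesis using uv by simp
  qed
  then show ?thesis
    unfolding orbit_tree_cycle_list Ts_def Tt_def by simp
qed

lemma orbit_minima_compose_transpose:
  "orbit_minima (\<tau> \<circ> transpose i (Suc n)) (Suc n) = orbit_minima \<tau> n"
  by (simp only: orbit_minima_def orbit_minima_set_compose_transpose)

lemma num_orbits_compose_transpose:
  "num_orbits (\<tau> \<circ> transpose i (Suc n)) (Suc n) = num_orbits \<tau> n"
  by (simp only: num_orbits_eq_card_minima[OF compose_transpose_permutes]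
      num_orbits_eq_card_minima[OF \<tau>] orbit_minima_set_compose_transpose)

lemma Psi_compose_transpose:
  fixes G :: "'x forest"
  assumes "length G = n"
  shows "Psi (G @ [y]) (\<tau> \<circ> transpose i (Suc n)) = Psi (G[i - 1 := Node (G ! (i - 1)) y]) \<tau>"
  unfolding Psi_def length_append_singleton length_list_update assms orbit_minima_compose_transpose
  by (rule map_cong[OF refl]) (simp add: orbit_minima_def orbit_tree_compose_transpose[OF assms])

end

lemma sorted_list_of_set_insert_greater:
  assumes "finite A" "\<forall>x\<in>A. x < (b :: 'a :: linorder)"
  shows "sorted_list_of_set (insert b A) = sorted_list_of_set A @ [b]"
proof -
  have "b \<notin> A" using assms(2) by auto
  then have "sorted_list_of_set (insert b A) = insort b (sorted_list_of_set A)"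
    using assms(1) by (simp add: sorted_list_of_set_insert_remove)
  also have "\<dots> = sorted_list_of_set A @ [b]"
    by (rule sorted_insort_is_snoc) (use assms in \<open>auto simp: less_imp_le\<close>)
  finally show ?thesis .
qed

lemma orbit_minima_set_Suc_fixed:
  assumes "\<tau> permutes {1..n}"
  shows "{x \<in> {1..Suc n}. x = Min (orbit \<tau> x)} = insert (Suc n) {x \<in> {1..n}. x = Min (orbit \<tau> x)}"
proof (rule set_eqI)
  have "orbit \<tau> (Suc n) = {Suc n}"
    using permutes_not_in[OF assms] by (simp add: orbit_eq_singleton_iff)
  then show "x \<in> {x \<in> {1..Suc n}. x = Min (orbit \<tau> x)} \<longleftrightarrow> x \<in> insert (Suc n) {x \<in> {1..n}. x = Min (orbit \<tau> x)}"
    for x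
  proof (cases "x = Suc n")
    case False
    then have "x \<in> {1..Suc n} \<longleftrightarrow> x \<in> {1..n}" by auto
    then show ?thesis using False by (simp only: mem_Collect_eq insert_iff simp_thms)
  qed simp
qed

lemma orbit_tree_snoc_fixed:
  fixes G :: "'x forest"
  assumes \<tau>: "\<tau> permutes {1..n}" and "length G = n" "x \<in> {1..n}"
  shows "orbit_tree (G @ [y]) \<tau> x = orbit_tree G \<tau> x"
proof -
  have perm: "permutation \<tau>" using \<tau> permutation_permutes by blast
  have sub: "set (tl (cycle_list \<tau> x)) \<subseteq> {1..n}"
    using set_tl_cycle_list[OF perm, of x] permutes_orbit_subset[OF \<tau> assms(3)] by (rule order_trans)
  have same: "(G @ [y]) ! (z - 1) = G ! (z - 1)" if "z \<in> {1..n}" for z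
    using that assms(2) by (auto simp: nth_append)
  show ?thesis
    unfolding orbit_tree_cycle_list using sub assms(3) by (intro bt_cong) (blast intro: same)+
qed

lemma
  fixes G :: "'x forest"
  assumes \<tau>: "\<tau> permutes {1..n}" and G: "length G = n"
  shows Psi_snoc_fixed: "Psi (G @ [y]) \<tau> = Psi G \<tau> @ [y]"
    and num_orbits_Suc_fixed: "num_orbits \<tau> (Suc n) = Suc (num_orbits \<tau> n)"
proof -
  have "orbit_minima \<tau> (Suc n) = orbit_minima \<tau> n @ [Suc n]"
    unfolding orbit_minima_def orbit_minima_set_Suc_fixed[OF \<tau>]
    by (rule sorted_list_of_set_insert_greater) auto
  moreover have "orbit \<tau> (Suc n) = {Suc n}"
    using permutes_not_in[OF \<tau>] by (simp add: orbit_eq_singleton_iff)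
  then have "orbit_tree (G @ [y]) \<tau> (Suc n) = y"
    using G by (simp add: orbit_tree_def nth_append)
  ultimately show "Psi (G @ [y]) \<tau> = Psi G \<tau> @ [y]"
    unfolding Psi_def length_append_singleton G
    by (simp add: orbit_tree_snoc_fixed[OF \<tau> G] orbit_minima_def)
  have "\<tau> permutes {1..Suc n}" by (rule permutes_subset[OF \<tau>]) auto
  then show "num_orbits \<tau> (Suc n) = Suc (num_orbits \<tau> n)"
    unfolding num_orbits_eq_card_minima[OF \<tau>] num_orbits_eq_card_minima[OF \<open>\<tau> permutes {1..Suc n}\<close>]
      orbit_minima_set_Suc_fixed[OF \<tau>]
    by (simp add: card_insert_if)
qed

lemma sum_permutations_Suc:
  "(\<Sum>\<sigma>\<in>{\<sigma>. \<sigma> permutes {1..Suc n}}. h \<sigma>) =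
     (\<Sum>\<tau>\<in>{\<tau>. \<tau> permutes {1..n}}. h \<tau>)
     + (\<Sum>i\<in>{1..n}. \<Sum>\<tau>\<in>{\<tau>. \<tau> permutes {1..n}}. h (\<tau> \<circ> transpose i (Suc n)))"
proof -
  let ?S = "{\<tau>. \<tau> permutes {1..n}}"
  have inv_comp: "inv (transpose (Suc n) b \<circ> q) = inv q \<circ> transpose b (Suc n)" if "q \<in> ?S" for q b
    using that by (simp add: o_inv_distrib permutes_bij transpose_commute)
  have "(\<Sum>\<sigma>\<in>{\<sigma>. \<sigma> permutes {1..Suc n}}. h \<sigma>) = (\<Sum>\<sigma>\<in>{\<sigma>. \<sigma> permutes insert (Suc n) {1..n}}. h (inv \<sigma>))"
    by (subst sum_permutations_inverse) (simp add: atLeastAtMostSuc_conv)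
  also have "\<dots> = (\<Sum>b\<in>insert (Suc n) {1..n}. \<Sum>q\<in>?S. h (inv (transpose (Suc n) b \<circ> q)))"
    by (rule sum_over_permutations_insert) auto
  also have "\<dots> = (\<Sum>b\<in>insert (Suc n) {1..n}. \<Sum>q\<in>?S. h (inv q \<circ> transpose b (Suc n)))"
    by (intro sum.cong refl) (simp only: inv_comp)
  also have "\<dots> = (\<Sum>b\<in>insert (Suc n) {1..n}. \<Sum>q\<in>?S. h (q \<circ> transpose b (Suc n)))"
    by (rule sum.cong[OF refl]) (rule sum_permutations_inverse[symmetric])
  finally show ?thesis by simp
qed

section \<open>The permutation expansion\<close>

lemma star_single_right: "star a (frag_of [y]) = graft1_lin y a"
  by (simp add: star_def magstar_eq_star_rec bilin_eq_frag_bilin frag_bilin_of_right graft1_lin_def)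

lemma graft_snoc: "graft F (S @ [y]) = graft1_lin y (graft F S)"
proof (cases "rev S")
  case Nil
  then show ?thesis by (simp add: graft_def)
next
  case (Cons t rs)
  then show ?thesis by (simp add: graft_def star_single_right)
qed

definition psi_term :: "'x forest \<Rightarrow> 'x forest \<Rightarrow> (nat \<Rightarrow> nat) \<Rightarrow> 'x tmag" where
  "psi_term F G \<sigma> = frag_cmul ((-1) ^ (num_orbits \<sigma> (length G) + length G)) (graft F (Psi G \<sigma>))"

definition psi_sum :: "'x forest \<Rightarrow> 'x forest \<Rightarrow> 'x tmag" where
  "psi_sum F G = (\<Sum>\<sigma>\<in>{\<sigma>. \<sigma> permutes {1..length G}}. psi_term F G \<sigma>)"

lemma psi_sum_Nil [simp]: "psi_sum F [] = frag_of F"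
  by (simp add: psi_sum_def psi_term_def num_orbits_def Psi_def orbit_minima_def graft_def)

lemma psi_term_snoc_fixed:
  assumes "\<tau> permutes {1..length G}"
  shows "psi_term F (G @ [y]) \<tau> = graft1_lin y (psi_term F G \<tau>)"
  using Psi_snoc_fixed[OF assms refl] num_orbits_Suc_fixed[OF assms refl]
  by (simp add: psi_term_def graft_snoc graft1_lin_cmul_scalar)

lemma psi_term_compose_transpose:
  assumes "\<tau> permutes {1..length G}" "i \<in> {1..length G}"
  shows "psi_term F (G @ [y]) (\<tau> \<circ> transpose i (Suc (length G))) =
    - psi_term F (G[i - 1 := Node (G ! (i - 1)) y]) \<tau>"
  using Psi_compose_transpose[OF assms refl] num_orbits_compose_transpose[OF assms]
  by (simp add: psi_term_def)

lemma frag_extend_psi_sum_graft1: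
  "frag_extend (psi_sum F) (graft1 G y) = (\<Sum>i\<in>{1..length G}. psi_sum F (G[i - 1 := Node (G ! (i - 1)) y]))"
  by (simp add: graft1_def frag_extend_sum sum.atLeast1_atMost_eq)

lemma psi_sum_snoc:
  "psi_sum F (G @ [y]) = graft1_lin y (psi_sum F G) - frag_extend (psi_sum F) (graft1 G y)"
proof -
  let ?S = "{\<tau>. \<tau> permutes {1..length G}}"
  have "psi_sum F (G @ [y]) = (\<Sum>\<tau>\<in>?S. psi_term F (G @ [y]) \<tau>)
      + (\<Sum>i\<in>{1..length G}. \<Sum>\<tau>\<in>?S. psi_term F (G @ [y]) (\<tau> \<circ> transpose i (Suc (length G))))"
    unfolding psi_sum_def length_append_singleton by (rule sum_permutations_Suc)
  also have "(\<Sum>\<tau>\<in>?S. psi_term F (G @ [y]) \<tau>) = graft1_lin y (psi_sum F G)"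
    by (simp add: psi_term_snoc_fixed psi_sum_def graft1_lin_sum)
  also have "(\<Sum>i\<in>{1..length G}. \<Sum>\<tau>\<in>?S. psi_term F (G @ [y]) (\<tau> \<circ> transpose i (Suc (length G)))) =
      - frag_extend (psi_sum F) (graft1 G y)"
    by (simp add: psi_term_compose_transpose frag_extend_psi_sum_graft1 psi_sum_def sum_negf)
  finally show ?thesis by simp
qed

lemma star_rec_eq_psi_sum: "star_rec F G = psi_sum F G"
proof (induction G rule: forest_snoc_induct)
  case (snoc G y)
  then show ?case by (simp add: psi_sum_snoc cong: frag_extend_cong)
qed simp

theorem corollary4p4:
  fixes F F' :: "'x forest"
  assumes "length F' \<ge> 1"
  shows "magstar F F' =
    (\<Sum>\<sigma> \<in> {\<sigma>. \<sigma> permutes {1..length F'}}.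
       frag_cmul ((-1) ^ (num_orbits \<sigma> (length F') + length F')) (graft F (Psi F' \<sigma>)))"
  using star_rec_eq_psi_sum[of F F'] by (simp add: magstar_eq_star_rec psi_sum_def psi_term_def)

end
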